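(* Let $S \in \{0,1\}^{\omega}$. 1. If $\rho_{\mathrm{PD}}(S) = 1$, then $S$ is not PD-deep. 2. If $R_{\mathrm{UPD}}(S) = 0$, then $S$ is not PD-deep.
   Context: For $S\in\{0,1\}^\omega$, $S\upharpoonright n$ denotes the prefix of length $n$ of $S$. A pushdown compressor (PDC) is a tuple $C=(Q,\Gamma,\delta,\nu,q_0,z_0,c)$ where $Q$ is a finite nonempty set of states, $\Gamma=\{0,1,z_0\}$ is the stack alphabet with $z_0$ the bottom-of-stack symbol, $\delta: Q\times(\{0,1\}\cup\{\lambda\})\times\Gamma\to Q\times\Gamma^*$ is a partial transition function, $\nu: Q\times(\{0,1\}\cup\{\lambda\})\times\Gamma\to\{0,1\}^*$ is the output function, $q_0$ is the start state, and $c\in\mathbb{N}$ bounds the number of consecutive $\lambda$-transitions (transitions that read no input bit; $\lambda$-transitions pop the top stack symbol and output nothing). On each transition the top stack symbol is replaced by the string given by $\delta$; $z_0$ is never removed from the bottom. Determinism: for each state $q$ and top symbol $a$, either $\delta(q,\lambda,a)$ is undefined or $\delta(q,b,a)$ is undefined for both $b\in\{0,1\}$. After each input bit, all available $\lambda$-transitions are performed. $C(w)$ denotes the concatenated output on input $w$ from $q_0$ with stack $z_0$, and $\delta_Q(w)$ the resulting state. $C$ is information lossless (an ILPDC) if $w\mapsto (C(w),\delta_Q(w))$ is injective. A unary-stack PDC (UPDC) is defined identically but with stack alphabet $\Gamma=\{0,z_0\}$; an information lossless one is an ILUPDC. $\rho_{\mathrm{PD}}(S)=\inf_{C\in\mathrm{ILPDC}}\liminf_{n\to\infty}|C(S\upharpoonright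 n)|/n$ and $R_{\mathrm{UPD}}(S)=\inf_{C\in\mathrm{ILUPDC}}\limsup_{n\to\infty}|C(S\upharpoonright n)|/n$. $S$ is PD-deep if there is $\alpha>0$ such that for every ILUPDC $C$ there is an ILPDC $C'$ with $|C(S\upharpoonright n)|-|C'(S\upharpoonright n)|\ge \alpha n$ for all but finitely many $n$. *)

theory Defs
  imports Complex_Main "HOL-Library.Extended_Real" "HOL-Library.Liminf_Limsup"
begin

text \<open>Stack alphabet: S0 = 0, S1 = 1, Z0 = bottom-of-stack symbol z0.
  Input symbols: Some b = bit b (False = 0, True = 1), None = lambda (no input).\<close>
datatype gsym = S0 | S1 | Z0

record pdc =
  pd_states :: "nat set"
  pd_delta  :: "nat \<Rightarrow> bool option \<Rightarrow> gsym \<Rightarrow> (nat \<times> gsym list) option"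
  pd_nu     :: "nat \<Rightarrow> bool option \<Rightarrow> gsym \<Rightarrow> bool list"
  pd_start  :: nat
  pd_bound  :: nat

text \<open>Performing all available lambda-transitions, with at most n consecutive ones allowed
  (None = the bound is violated).  The stack is a list with its top first.\<close>
fun lam_close :: "pdc \<Rightarrow> nat \<Rightarrow> nat \<times> gsym list \<Rightarrow> (nat \<times> gsym list) option" where
  "lam_close C n (q, []) = Some (q, [])"
| "lam_close C 0 (q, a # s) =
     (if pd_delta C q None a = None then Some (q, a # s) else None)"
| "lam_close C (Suc n) (q, a # s) =
     (case pd_delta C q None a of
        None \<Rightarrow> Some (q, a # s)
      | Some (q', g) \<Rightarrow> lam_close C n (q', g @ s))"

fun pd_step :: "pdc \<Rightarrow> bool \<Rightarrow> nat \<times> gsym list \<Rightarrow> ((nat \<times> gsym list) \<times> bool list) option" where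
  "pd_step C b (q, []) = None"
| "pd_step C b (q, a # s) =
     (case pd_delta C q (Some b) a of
        None \<Rightarrow> None
      | Some (q', g) \<Rightarrow>
          map_option (\<lambda>cf. (cf, pd_nu C q (Some b) a)) (lam_close C (pd_bound C) (q', g @ s)))"

fun pd_run_from :: "pdc \<Rightarrow> nat \<times> gsym list \<Rightarrow> bool list \<Rightarrow> ((nat \<times> gsym list) \<times> bool list) option" where
  "pd_run_from C cf [] = Some (cf, [])"
| "pd_run_from C cf (b # w) =
     (case pd_step C b cf of
        None \<Rightarrow> None
      | Some (cf', out) \<Rightarrow> map_option (\<lambda>(cf'', out'). (cf'', out @ out')) (pd_run_from C cf' w))"

definition pd_run :: "pdc \<Rightarrow> bool list \<Rightarrow> ((nat \<times> gsym list) \<times> bool list) option" where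
  "pd_run C w = pd_run_from C (pd_start C, [Z0]) w"

definition pd_out :: "pdc \<Rightarrow> bool list \<Rightarrow> bool list" where
  "pd_out C w = (case pd_run C w of Some (_, out) \<Rightarrow> out | None \<Rightarrow> [])"

definition pd_state :: "pdc \<Rightarrow> bool list \<Rightarrow> nat" where
  "pd_state C w = (case pd_run C w of Some ((q, _), _) \<Rightarrow> q | None \<Rightarrow> pd_start C)"

definition stack_alph :: "bool \<Rightarrow> gsym set" where
  "stack_alph unary = (if unary then {S0, Z0} else {S0, S1, Z0})"

definition nonbot_alph :: "bool \<Rightarrow> gsym set" where
  "nonbot_alph unary = (if unary then {S0} else {S0, S1})"

text \<open>Well-formed (deterministic, lambda-bounded) pushdown compressor; unary = True gives a UPDC.\<close>
definition pdc_valid :: "bool \<Rightarrow> pdc \<Rightarrow> bool" where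
  "pdc_valid unary C \<longleftrightarrow>
     finite (pd_states C) \<and> pd_states C \<noteq> {} \<and> pd_start C \<in> pd_states C \<and>
     (\<forall>q \<in> pd_states C. \<forall>x. \<forall>a \<in> stack_alph unary. \<forall>q' g.
        pd_delta C q x a = Some (q', g) \<longrightarrow>
          q' \<in> pd_states C \<and>
          (a \<noteq> Z0 \<longrightarrow> set g \<subseteq> nonbot_alph unary) \<and>
          (a = Z0 \<longrightarrow> (\<exists>g'. g = g' @ [Z0] \<and> set g' \<subseteq> nonbot_alph unary)) \<and>
          (x = None \<longrightarrow> g = (if a = Z0 then [Z0] else []))) \<and>
     (\<forall>q \<in> pd_states C. \<forall>a \<in> stack_alph unary. pd_nu C q None a = []) \<and>
     (\<forall>q \<in> pd_states C. \<forall>a \<in> stack_alph unary.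
        pd_delta C q None a = None \<or> (\<forall>b. pd_delta C q (Some b) a = None)) \<and>
     (\<forall>w. pd_run C w \<noteq> None)"

definition info_lossless :: "pdc \<Rightarrow> bool" where
  "info_lossless C \<longleftrightarrow> inj (\<lambda>w. (pd_out C w, pd_state C w))"

definition ILPDC :: "pdc \<Rightarrow> bool" where
  "ILPDC C \<longleftrightarrow> pdc_valid False C \<and> info_lossless C"

definition ILUPDC :: "pdc \<Rightarrow> bool" where
  "ILUPDC C \<longleftrightarrow> pdc_valid True C \<and> info_lossless C"

definition pref :: "(nat \<Rightarrow> bool) \<Rightarrow> nat \<Rightarrow> bool list" where
  "pref S n = map S [0..<n]"

definition ratio :: "pdc \<Rightarrow> (nat \<Rightarrow> bool) \<Rightarrow> nat \<Rightarrow> ereal" where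
  "ratio C S n = ereal (real (length (pd_out C (pref S n))) / real n)"

definition rho_PD :: "(nat \<Rightarrow> bool) \<Rightarrow> ereal" where
  "rho_PD S = (INF C \<in> {C. ILPDC C}. liminf (ratio C S))"

definition R_UPD :: "(nat \<Rightarrow> bool) \<Rightarrow> ereal" where
  "R_UPD S = (INF C \<in> {C. ILUPDC C}. limsup (ratio C S))"

definition PD_deep :: "(nat \<Rightarrow> bool) \<Rightarrow> bool" where
  "PD_deep S \<longleftrightarrow> (\<exists>\<alpha>::real > 0. \<forall>C. ILUPDC C \<longrightarrow> (\<exists>C'. ILPDC C' \<and>
      (\<forall>\<^sub>F n in sequentially.
         real (length (pd_out C (pref S n))) - real (length (pd_out C' (pref S n))) \<ge> \<alpha> * real n)))"

end

theory Submission
  imports Defs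
begin

text \<open>The identity map is computed by a one-state unary-stack compressor, so depth of \<open>S\<close>
  forces some ILPDC to output at most \<open>(1 - \<alpha>) n\<close> bits on \<open>S\<upharpoonright>n\<close>; then \<open>\<rho>\<^sub>PD(S) \<le> 1 - \<alpha>\<close>.
  Depth also forces every ILUPDC to output at least \<open>\<alpha> n\<close> bits on \<open>S\<upharpoonright>n\<close>, since the
  compressor beating it has nonnegative output length; then \<open>R\<^sub>UPD(S) \<ge> \<alpha>\<close>.\<close>

definition id_pdc :: pdc where
  "id_pdc = \<lparr>pd_states = {0},
             pd_delta = (\<lambda>q x a. case x of None \<Rightarrow> None | Some b \<Rightarrow> Some (0, [a])),
             pd_nu = (\<lambda>q x a. case x of None \<Rightarrow> [] | Some b \<Rightarrow> [b]),
             pd_start = 0, pd_bound = 0\<rparr>"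

lemma pd_run_id_pdc: "pd_run id_pdc w = Some ((0, [Z0]), w)"
proof -
  have "pd_run_from id_pdc (0, [Z0]) w = Some ((0, [Z0]), w)"
    by (induction w) (auto simp: id_pdc_def)
  then show ?thesis
    by (simp add: pd_run_def id_pdc_def)
qed

lemma pd_out_id_pdc: "pd_out id_pdc w = w"
  by (simp add: pd_out_def pd_run_id_pdc)

lemma ILUPDC_id_pdc: "ILUPDC id_pdc"
  unfolding ILUPDC_def pdc_valid_def info_lossless_def
  by (auto simp: pd_run_id_pdc pd_out_id_pdc stack_alph_def nonbot_alph_def inj_def
           split: option.splits)
     (auto simp: id_pdc_def split: option.splits)

lemma ratio_eventually_ge:
  assumes "\<forall>\<^sub>F n in sequentially. c * real n \<le> real (length (pd_out C (pref S n)))"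
  shows "\<forall>\<^sub>F n in sequentially. ereal c \<le> ratio C S n"
  using assms eventually_gt_at_top[of 0]
  by eventually_elim (simp add: ratio_def field_simps)

lemma ratio_eventually_le:
  assumes "\<forall>\<^sub>F n in sequentially. real (length (pd_out C (pref S n))) \<le> c * real n"
  shows "\<forall>\<^sub>F n in sequentially. ratio C S n \<le> ereal c"
  using assms eventually_gt_at_top[of 0]
  by eventually_elim (simp add: ratio_def field_simps)

lemma PD_deep_imp_ILPDC_compressing:
  assumes "PD_deep S"
  shows "\<exists>\<alpha> > 0. \<exists>C. ILPDC C \<and> liminf (ratio C S) \<le> ereal (1 - \<alpha>)"
proof -
  obtain \<alpha> C where "\<alpha> > 0" "ILPDC C" and gap: "\<forall>\<^sub>F n in sequentially.
      real (length (pd_out id_pdc (pref S n))) - real (length (pd_out C (pref S n))) \<ge> \<alpha> * real n"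
    using assms ILUPDC_id_pdc unfolding PD_deep_def by blast
  from gap have "\<forall>\<^sub>F n in sequentially. real (length (pd_out C (pref S n))) \<le> (1 - \<alpha>) * real n"
    by eventually_elim (simp add: pd_out_id_pdc pref_def algebra_simps)
  then have "liminf (ratio C S) \<le> ereal (1 - \<alpha>)"
    by (intro Liminf_le ratio_eventually_le) simp_all
  with \<open>\<alpha> > 0\<close> \<open>ILPDC C\<close> show ?thesis
    by blast
qed

lemma rho_PD_lt_1_if_PD_deep:
  assumes "PD_deep S"
  shows "rho_PD S < 1"
proof -
  obtain \<alpha> C where "\<alpha> > 0" "ILPDC C" "liminf (ratio C S) \<le> ereal (1 - \<alpha>)"
    using PD_deep_imp_ILPDC_compressing[OF assms] by blast
  then have "rho_PD S \<le> ereal (1 - \<alpha>)"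
    unfolding rho_PD_def by (blast intro: INF_lower2)
  also have "\<dots> < 1"
    using \<open>\<alpha> > 0\<close> by simp
  finally show ?thesis .
qed

lemma PD_deep_imp_ILUPDC_ratio_bounded_below:
  assumes "PD_deep S"
  shows "\<exists>\<alpha> > 0. \<forall>C. ILUPDC C \<longrightarrow> ereal \<alpha> \<le> limsup (ratio C S)"
proof -
  obtain \<alpha> :: real where "\<alpha> > 0" and deep: "\<forall>C. ILUPDC C \<longrightarrow> (\<exists>C'. ILPDC C' \<and>
      (\<forall>\<^sub>F n in sequentially.
         real (length (pd_out C (pref S n))) - real (length (pd_out C' (pref S n))) \<ge> \<alpha> * real n))"
    using assms unfolding PD_deep_def by blast
  have "ereal \<alpha> \<le> limsup (ratio C S)" if "ILUPDC C" for C
  proof -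
    obtain C' where "\<forall>\<^sub>F n in sequentially.
        real (length (pd_out C (pref S n))) - real (length (pd_out C' (pref S n))) \<ge> \<alpha> * real n"
      using deep \<open>ILUPDC C\<close> by blast
    then have "\<forall>\<^sub>F n in sequentially. \<alpha> * real n \<le> real (length (pd_out C (pref S n)))"
      by eventually_elim simp
    then show ?thesis
      by (intro le_Limsup ratio_eventually_ge) simp_all
  qed
  with \<open>\<alpha> > 0\<close> show ?thesis
    by blast
qed

lemma R_UPD_pos_if_PD_deep:
  assumes "PD_deep S"
  shows "R_UPD S > 0"
proof -
  obtain \<alpha> where "\<alpha> > 0" and bound: "\<forall>C. ILUPDC C \<longrightarrow> ereal \<alpha> \<le> limsup (ratio C S)"
    using PD_deep_imp_ILUPDC_ratio_bounded_below[OF assms] by blast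
  have "0 < ereal \<alpha>"
    using \<open>\<alpha> > 0\<close> by simp
  also have "\<dots> \<le> R_UPD S"
    using bound unfolding R_UPD_def by (blast intro: INF_greatest)
  finally show ?thesis .
qed

theorem mainTheorem1:
  fixes S :: "nat \<Rightarrow> bool"
  shows "(rho_PD S = 1 \<longrightarrow> \<not> PD_deep S) \<and> (R_UPD S = 0 \<longrightarrow> \<not> PD_deep S)"
  using rho_PD_lt_1_if_PD_deep R_UPD_pos_if_PD_deep by fastforce

end
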